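(* Let $p$ be a prime and $\lambda$ a partition with $r(\lambda)=(r_1,\ldots,r_{p-1})$. Suppose $p\nmid|\lambda|$ and there exist distinct $a,c\in\{1,\ldots,p-1\}$ with $r_a=r_c=\max r(\lambda)$. Then $c^{(p)}_\lambda\neq0$.
   Context: A composition is a finite sequence $\delta=(\delta_1,\ldots,\delta_s)$ of positive integers, $\ell(\delta)=s$, $|\delta|=\sum_i\delta_i$; a partition is a composition with weakly decreasing parts. Partial sums $\delta^+_j=\sum_{i=1}^j\delta_i$. $n_d(\delta)$ is the number of parts of $\delta$ equal to $d$. A composition is $p'$-cumulative if it is nonempty and $p\nmid\delta^+_j$ for all $1\le j\le\ell(\delta)$. $c^{(p)}_\lambda$ is the number of $p'$-cumulative compositions that are rearrangements of $\lambda$. For $1\le j\le p-1$, $r_j(\lambda)=\sum_{i\equiv j\,(\mathrm{mod}\ p)}n_i(\lambda)$, $r(\lambda)=(r_1(\lambda),\ldots,r_{p-1}(\lambda))$, and $\max r(\lambda)$ is its largest entry. *)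

theory Defs
  imports Main "HOL-Library.Multiset" "HOL-Computational_Algebra.Primes"
begin

definition is_composition :: "nat list \<Rightarrow> bool" where
  "is_composition \<delta> \<longleftrightarrow> (\<forall>x\<in>set \<delta>. 0 < x)"

definition is_partition :: "nat list \<Rightarrow> bool" where
  "is_partition lam \<longleftrightarrow> is_composition lam \<and> sorted_wrt (\<ge>) lam"

definition psum :: "nat list \<Rightarrow> nat \<Rightarrow> nat" where
  "psum \<delta> j = sum_list (take j \<delta>)"

definition n_d :: "nat \<Rightarrow> nat list \<Rightarrow> nat" where
  "n_d d \<delta> = count (mset \<delta>) d"

definition p_cumulative :: "nat \<Rightarrow> nat list \<Rightarrow> bool" where
  "p_cumulative p \<delta> \<longleftrightarrow> is_composition \<delta> \<and> \<delta> \<noteq> [] \<and>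
     (\<forall>j. 1 \<le> j \<and> j \<le> length \<delta> \<longrightarrow> \<not> p dvd psum \<delta> j)"

definition c_p :: "nat \<Rightarrow> nat list \<Rightarrow> nat" where
  "c_p p lam = card {\<delta>. mset \<delta> = mset lam \<and> p_cumulative p \<delta>}"

definition r_j :: "nat \<Rightarrow> nat list \<Rightarrow> nat \<Rightarrow> nat" where
  "r_j p lam j = length (filter (\<lambda>x. x mod p = j mod p) lam)"

definition max_r :: "nat \<Rightarrow> nat list \<Rightarrow> nat" where
  "max_r p lam = Max (r_j p lam ` {1..p-1})"

end

theory Submission
  imports Defs "HOL-Combinatorics.Multiset_Permutations"
begin

text \<open>Parts divisible by \<open>p\<close> can be inserted right after the first part without creating
a partial sum divisible by \<open>p\<close>, so it suffices to order the remaining parts. These are placed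
greedily. With running sum \<open>t\<close>, exactly one residue class is forbidden for the next part,
namely that of \<open>-t\<close>. One maintains two residue classes \<open>w \<noteq> u\<close> such that \<open>u\<close> is largest
among the classes other than \<open>w\<close>, and \<open>w\<close> exceeds \<open>u\<close> by at most two parts, where an
excess of two is allowed only if \<open>w\<close> is not forbidden. Taking a part from \<open>w\<close>, or from \<open>u\<close>
when \<open>w\<close> is forbidden, or from the unforbidden one of the two when they tie, preserves
this invariant; the hypothesis that \<open>p\<close> does not divide \<open>|\<lambda>|\<close> rules out getting stuck on a single last part.
Two classes attaining the maximum give the invariant at the start.\<close>

definition partial_sums_avoid :: "nat \<Rightarrow> nat \<Rightarrow> nat list \<Rightarrow> bool" where
  "partial_sums_avoid p t xs \<longleftrightarrow> (\<forall>j\<in>{1..length xs}. \<not> p dvd (t + psum xs j))"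

lemma partial_sums_avoid_Nil [simp]: "partial_sums_avoid p t []"
  by (simp add: partial_sums_avoid_def)

lemma partial_sums_avoid_Cons:
  "partial_sums_avoid p t (x # xs) \<longleftrightarrow> \<not> p dvd (t + x) \<and> partial_sums_avoid p (t + x) xs"
proof -
  have "(\<forall>j\<in>{1..Suc n}. P j) \<longleftrightarrow> P 1 \<and> (\<forall>k\<in>{1..n}. P (Suc k))"
    for P :: "nat \<Rightarrow> bool" and n
  proof
    assume h: "P 1 \<and> (\<forall>k\<in>{1..n}. P (Suc k))"
    show "\<forall>j\<in>{1..Suc n}. P j"
    proof
      fix j assume "j \<in> {1..Suc n}"
      then obtain k where "j = Suc k" "k \<le> n" by (cases j) auto
      then show "P j" using h by (cases k) auto
    qed
  qed auto
  then show ?thesis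
    by (simp add: partial_sums_avoid_def psum_def add.assoc del: One_nat_def) (simp add: One_nat_def)
qed

lemma partial_sums_avoid_shift:
  assumes "p dvd z"
  shows "partial_sums_avoid p (t + z) xs \<longleftrightarrow> partial_sums_avoid p t xs"
proof -
  have "p dvd t + z + s \<longleftrightarrow> p dvd t + s" for s
    using assms by (metis add.assoc add.commute dvd_add_right_iff)
  then show ?thesis by (simp add: partial_sums_avoid_def)
qed

lemma partial_sums_avoid_append_multiples:
  assumes "\<forall>z\<in>set zs. p dvd z" and "\<not> p dvd t"
  shows "partial_sums_avoid p t (zs @ xs) \<longleftrightarrow> partial_sums_avoid p t xs"
  using assms
proof (induction zs arbitrary: t)
  case (Cons z zs)
  then have "\<not> p dvd t + z" and "partial_sums_avoid p (t + z) xs = partial_sums_avoid p t xs"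
    by (simp_all add: dvd_add_left_iff partial_sums_avoid_shift)
  with Cons show ?case by (simp add: partial_sums_avoid_Cons)
qed simp

lemma p_cumulative_insert_multiples:
  assumes "partial_sums_avoid p 0 (x # xs)" and "\<forall>z\<in>set zs. p dvd z"
    and "is_composition (x # zs @ xs)"
  shows "p_cumulative p (x # zs @ xs)"
proof -
  have "partial_sums_avoid p 0 (x # zs @ xs)"
    using assms(1,2) by (simp add: partial_sums_avoid_Cons partial_sums_avoid_append_multiples)
  with assms(3) show ?thesis
    by (simp add: p_cumulative_def partial_sums_avoid_def)
qed

lemma c_p_neq_0:
  assumes "mset \<delta> = mset lam" and "p_cumulative p \<delta>"
  shows "c_p p lam \<noteq> 0"
proof -
  have "{\<delta>. mset \<delta> = mset lam \<and> p_cumulative p \<delta>} \<subseteq> permutations_of_multiset (mset lam)"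
    by (auto simp: permutations_of_multiset_def)
  then have "finite {\<delta>. mset \<delta> = mset lam \<and> p_cumulative p \<delta>}"
    using finite_permutations_of_multiset finite_subset by blast
  with assms show ?thesis by (auto simp: c_p_def)
qed

definition residue_count :: "nat \<Rightarrow> nat multiset \<Rightarrow> nat \<Rightarrow> nat" where
  "residue_count p R = count (image_mset (\<lambda>x. x mod p) R)"

lemma residue_count_remove:
  assumes "x \<in># R"
  shows "residue_count p (R - {#x#}) =
    (residue_count p R)(x mod p := residue_count p R (x mod p) - 1)"
  using assms by (auto simp: residue_count_def image_mset_Diff)

lemma residue_count_pos_iff: "0 < residue_count p R v \<longleftrightarrow> (\<exists>x\<in>#R. x mod p = v)"
  by (auto simp: residue_count_def)

lemma residue_count_eq_0_iff_empty: "residue_count p R = (\<lambda>_. 0) \<longleftrightarrow> R = {#}"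
  by (metis count_empty image_mset_is_empty_iff multiset_eqI residue_count_def)

definition top_pair :: "(nat \<Rightarrow> nat) \<Rightarrow> nat \<Rightarrow> nat \<Rightarrow> bool" where
  "top_pair n w u \<longleftrightarrow> w \<noteq> u \<and> n u \<le> n w \<and> (\<forall>r. r \<noteq> w \<and> r \<noteq> u \<longrightarrow> n r \<le> n u)"

lemma top_pair_le: "top_pair n w u \<Longrightarrow> n r \<le> n w"
  unfolding top_pair_def by (metis order_refl order_trans)

lemma top_pair_swap: "top_pair n w u \<Longrightarrow> n w = n u \<Longrightarrow> top_pair n u w"
  unfolding top_pair_def by auto

lemma top_pair_decr_leader:
  "top_pair n w u \<Longrightarrow> n u < n w \<Longrightarrow> top_pair (n(w := n w - 1)) w u"
  unfolding top_pair_def by auto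

lemma top_pair_decr_runner_up:
  assumes "top_pair n w u" and "0 < n u"
  obtains u' where "top_pair (n(u := n u - 1)) w u'" and "n w \<le> (n(u := n u - 1)) u' + (n w - n u) + 1"
proof (cases "\<exists>r. r \<noteq> w \<and> r \<noteq> u \<and> n r = n u")
  case True
  then obtain r where "r \<noteq> w" "r \<noteq> u" "n r = n u" by blast
  with assms have "top_pair (n(u := n u - 1)) w r" "n w \<le> (n(u := n u - 1)) r + (n w - n u) + 1"
    by (auto simp: top_pair_def)
  then show ?thesis by (rule that)
next
  case False
  with assms have "top_pair (n(u := n u - 1)) w u" "n w \<le> (n(u := n u - 1)) u + (n w - n u) + 1"
    by (fastforce simp: top_pair_def)+
  then show ?thesis by (rule that)
qed

lemma dvd_add_mod_iff: "(p::nat) dvd t + x \<longleftrightarrow> p dvd t + x mod p"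
  by (simp add: dvd_eq_mod_eq_0 mod_add_right_eq)

lemma dvd_add_imp_mod_eq: "(p::nat) dvd t + x \<Longrightarrow> p dvd t + y \<Longrightarrow> x mod p = y mod p"
proof -
  assume "p dvd t + x" and "p dvd t + y"
  then have "p dvd (t + y) - (t + x)" and "p dvd (t + x) - (t + y)"
    by (blast intro: dvd_diff_nat)+
  then have "p dvd y - x" and "p dvd x - y" by simp_all
  then show ?thesis by (metis mod_eq_dvd_iff_nat nat_le_linear)
qed

definition balanced :: "nat \<Rightarrow> nat \<Rightarrow> (nat \<Rightarrow> nat) \<Rightarrow> bool" where
  "balanced p t n \<longleftrightarrow>
     (\<exists>w u. top_pair n w u \<and> n w \<le> n u + 2 \<and> (n w = n u + 2 \<longrightarrow> \<not> p dvd t + w))"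

definition admissible :: "nat \<Rightarrow> nat \<Rightarrow> nat multiset \<Rightarrow> bool" where
  "admissible p t R \<longleftrightarrow>
     (\<forall>x\<in>#R. \<not> p dvd x) \<and> \<not> p dvd t + \<Sum>\<^sub># R \<and> balanced p t (residue_count p R)"

lemma admissible_remove:
  assumes "admissible p t R" and "x \<in># R"
    and "balanced p (t + x) (residue_count p (R - {#x#}))"
  shows "admissible p (t + x) (R - {#x#})"
  using assms sum_mset.remove[OF assms(2)]
  by (auto simp: admissible_def add.assoc dest: in_diffD)

definition extendable :: "nat \<Rightarrow> nat \<Rightarrow> nat multiset \<Rightarrow> bool" where
  "extendable p t R \<longleftrightarrow> (\<exists>x\<in>#R. \<not> p dvd t + x \<and> admissible p (t + x) (R - {#x#}))"

lemma extendableI: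
  assumes "admissible p t R" and "x \<in># R" and "x mod p = v" and "\<not> p dvd t + v"
    and "balanced p (t + x) ((residue_count p R)(v := residue_count p R v - 1))"
  shows "extendable p t R"
proof -
  have "\<not> p dvd t + x" using assms(3,4) dvd_add_mod_iff[of p t x] by simp
  moreover have "admissible p (t + x) (R - {#x#})"
    using admissible_remove[OF assms(1,2)] assms(3,5) by (simp add: residue_count_remove[OF assms(2)])
  ultimately show ?thesis using assms(2) by (auto simp: extendable_def)
qed

lemma extendable_leader:
  fixes p :: nat and R :: "nat multiset"
  defines "n \<equiv> residue_count p R"
  assumes adm: "admissible p t R" and top: "top_pair n w u"
    and less: "n u < n w" and gap: "n w \<le> n u + 2" and free: "\<not> p dvd t + w"
  shows "extendable p t R"
proof -
  obtain x where x: "x \<in># R" "x mod p = w"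
    using less residue_count_pos_iff unfolding n_def by (metis gr_zeroI not_less_zero)
  have "balanced p (t + x) (n(w := n w - 1))"
    using top_pair_decr_leader[OF top less] gap top
    unfolding balanced_def top_pair_def by (intro exI[of _ w] exI[of _ u]) auto
  then show ?thesis using extendableI[OF adm x free] by (simp add: n_def)
qed

lemma extendable_runner_up:
  fixes p :: nat and R :: "nat multiset"
  defines "n \<equiv> residue_count p R"
  assumes adm: "admissible p t R" and top: "top_pair n w u"
    and gap: "n w = n u + 1" and forbidden: "p dvd t + w"
  shows "extendable p t R"
proof -
  obtain y where y: "y \<in># R" "y mod p = w"
    using gap residue_count_pos_iff unfolding n_def by (metis add_gr_0 zero_less_one)
  have "p dvd t + y" using forbidden y(2) by (simp add: dvd_add_mod_iff[of p t y])
  have "0 < n u"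
  proof (rule ccontr)
    assume "\<not> 0 < n u"
    then have "n r \<le> 0" if "r \<noteq> w" for r
      using top that unfolding top_pair_def by (cases "r = u") auto
    with gap \<open>\<not> 0 < n u\<close> have "residue_count p (R - {#y#}) = (\<lambda>_. 0)"
      by (auto simp: residue_count_remove[OF y(1)] y(2) n_def)
    then have "R = {#y#}" using y(1)
      by (metis residue_count_eq_0_iff_empty insert_DiffM add_mset_remove_trivial_If)
    with adm \<open>p dvd t + y\<close> show False by (simp add: admissible_def)
  qed
  then obtain x where x: "x \<in># R" "x mod p = u"
    using residue_count_pos_iff unfolding n_def by blast
  have "\<not> p dvd t + u"
    using dvd_add_imp_mod_eq[OF \<open>p dvd t + y\<close>] dvd_add_mod_iff[of p t x] x(2) y(2) top
    by (auto simp: top_pair_def)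
  have "\<not> p dvd t + x + w"
  proof -
    have "\<not> p dvd x" using adm x(1) by (simp add: admissible_def)
    moreover have "p dvd (t + w) + x \<longleftrightarrow> p dvd x"
      using forbidden by (rule dvd_add_right_iff)
    ultimately show ?thesis by (simp add: ac_simps)
  qed
  moreover obtain u' where "top_pair (n(u := n u - 1)) w u'"
    and "n w \<le> (n(u := n u - 1)) u' + (n w - n u) + 1"
    using top_pair_decr_runner_up[OF top \<open>0 < n u\<close>] by blast
  moreover have "(n(u := n u - 1)) w = n w" using top by (simp add: top_pair_def)
  ultimately have "balanced p (t + x) (n(u := n u - 1))"
    unfolding balanced_def using gap by (intro exI[of _ w] exI[of _ u']) simp
  then show ?thesis using extendableI[OF adm x \<open>\<not> p dvd t + u\<close>] by (simp add: n_def)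
qed

lemma extendable_tie:
  fixes p :: nat and R :: "nat multiset"
  defines "n \<equiv> residue_count p R"
  assumes adm: "admissible p t R" and top: "top_pair n w u"
    and tie: "n w = n u" and pos: "0 < n u" and free: "\<not> p dvd t + u"
  shows "extendable p t R"
proof -
  obtain x where x: "x \<in># R" "x mod p = u"
    using pos residue_count_pos_iff unfolding n_def by blast
  obtain u' where "top_pair (n(u := n u - 1)) w u'"
    and "n w \<le> (n(u := n u - 1)) u' + (n w - n u) + 1"
    using top_pair_decr_runner_up[OF top pos] by blast
  moreover have "(n(u := n u - 1)) w = n w" using top by (simp add: top_pair_def)
  ultimately have "balanced p (t + x) (n(u := n u - 1))"
    unfolding balanced_def using tie by (intro exI[of _ w] exI[of _ u']) simp
  then show ?thesis using extendableI[OF adm x free] by (simp add: n_def)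
qed

lemma admissible_extendable:
  assumes adm: "admissible p t R" and "R \<noteq> {#}"
  shows "extendable p t R"
proof -
  let ?n = "residue_count p R"
  from adm obtain w u where top: "top_pair ?n w u" and gap: "?n w \<le> ?n u + 2"
    and free_w: "?n w = ?n u + 2 \<longrightarrow> \<not> p dvd t + w"
    by (auto simp: admissible_def balanced_def)
  obtain y where "y \<in># R" using \<open>R \<noteq> {#}\<close> by blast
  then have "0 < ?n (y mod p)" using residue_count_pos_iff by blast
  then have w_pos: "0 < ?n w" using top_pair_le[OF top] by (meson less_le_trans)
  consider "?n u < ?n w" "\<not> p dvd t + w" | "?n w = ?n u + 1" "p dvd t + w" | "?n w = ?n u"
    using gap free_w top unfolding top_pair_def by force
  then show ?thesis
  proof cases
    case 3
    obtain yw where yw: "yw \<in># R" "yw mod p = w" using w_pos residue_count_pos_iff by blast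
    obtain yu where yu: "yu \<in># R" "yu mod p = u" using w_pos 3 residue_count_pos_iff by auto
    have "\<not> (p dvd t + w \<and> p dvd t + u)"
    proof
      assume "p dvd t + w \<and> p dvd t + u"
      then have "p dvd t + yw" and "p dvd t + yu"
        using yw(2) yu(2) dvd_add_mod_iff[of p t] by auto
      then have "w = u" using dvd_add_imp_mod_eq yw(2) yu(2) by metis
      with top show False by (simp add: top_pair_def)
    qed
    then show ?thesis
      using extendable_tie[OF adm top 3] extendable_tie[OF adm top_pair_swap[OF top 3] 3[symmetric]]
        w_pos 3 by auto
  qed (use extendable_leader[OF adm top] extendable_runner_up[OF adm top] gap in auto)
qed

lemma admissible_sequenceable:
  "admissible p t R \<Longrightarrow> \<exists>xs. mset xs = R \<and> partial_sums_avoid p t xs"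
proof (induction "size R" arbitrary: R t rule: less_induct)
  case less
  show ?case
  proof (cases "R = {#}")
    case False
    then obtain x where x: "x \<in># R" "\<not> p dvd t + x" "admissible p (t + x) (R - {#x#})"
      using admissible_extendable[OF less.prems] by (auto simp: extendable_def)
    have "size (R - {#x#}) < size R" using x(1) by (simp add: size_Diff1_less)
    then obtain xs where "mset xs = R - {#x#}" "partial_sums_avoid p (t + x) xs"
      using less.hyps x(3) by blast
    with x show ?thesis by (intro exI[of _ "x # xs"]) (simp add: partial_sums_avoid_Cons)
  qed simp
qed

lemma count_image_mset_eq_size_filter:
  "count (image_mset f A) y = size {#x \<in># A. f x = y#}"
proof -
  have "count (image_mset f A) y = size {#z \<in># image_mset f A. z = y#}"
    by (simp add: filter_eq_replicate_mset)
  then show ?thesis by (simp add: filter_mset_image_mset)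
qed

lemma residue_count_nonmultiples:
  assumes "0 < p"
  shows "residue_count p {#x \<in># mset lam. \<not> p dvd x#} r =
    (if r \<in> {1..p-1} then r_j p lam r else 0)"
proof -
  have "residue_count p {#x \<in># mset lam. \<not> p dvd x#} r =
      size {#x \<in># mset lam. \<not> p dvd x \<and> x mod p = r#}"
    by (simp add: residue_count_def count_image_mset_eq_size_filter filter_filter_mset conj_commute)
  also have "\<dots> = (if r \<in> {1..p-1} then size {#x \<in># mset lam. x mod p = r mod p#} else 0)"
  proof (cases "r \<in> {1..p-1}")
    case True
    then have "(\<lambda>x. \<not> p dvd x \<and> x mod p = r) = (\<lambda>x. x mod p = r mod p)"
      by (auto simp: dvd_eq_mod_eq_0)
    with True show ?thesis by simp
  next
    case False
    have "\<not> (\<not> p dvd x \<and> x mod p = r)" for x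
      using False mod_less_divisor[OF assms, of x] by (auto simp: dvd_eq_mod_eq_0)
    then have empty: "{#x \<in># mset lam. \<not> p dvd x \<and> x mod p = r#} = {#}"
      by (simp add: filter_mset_eq_mempty_iff)
    show ?thesis by (simp only: empty if_not_P[OF False] size_empty)
  qed
  finally show ?thesis by (simp add: r_j_def flip: mset_filter)
qed

lemma mset_split_multiples:
  "mset lam = {#x \<in># mset lam. \<not> p dvd x#} + mset (filter ((dvd) p) lam)"
  using multiset_partition[of "mset lam" "\<lambda>x. \<not> p dvd x"] by simp

lemma admissible_nonmultiples:
  assumes "\<not> p dvd sum_list lam"
    and "a \<in> {1..p-1}" and "c \<in> {1..p-1}" and "a \<noteq> c"
    and "r_j p lam a = max_r p lam" and "r_j p lam c = max_r p lam"
  shows "admissible p 0 {#x \<in># mset lam. \<not> p dvd x#}" (is "admissible p 0 ?N")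
proof -
  have "0 < p" using assms(2) by auto
  have "sum_list lam = \<Sum>\<^sub># ?N + sum_list (filter ((dvd) p) lam)"
    using arg_cong[OF mset_split_multiples[of lam p], of sum_mset]
    by (simp only: sum_mset.union sum_mset_sum_list)
  moreover have "p dvd sum_list (filter ((dvd) p) lam)"
    by (induction lam) auto
  ultimately have "\<not> p dvd 0 + \<Sum>\<^sub># ?N"
    using assms(1) by (simp add: dvd_add_left_iff)
  moreover have "top_pair (residue_count p ?N) a c"
  proof -
    have "r_j p lam r \<le> max_r p lam" if "r \<in> {1..p-1}" for r
      using that by (simp add: max_r_def)
    then show ?thesis
      using assms(2-6) by (auto simp: top_pair_def residue_count_nonmultiples[OF \<open>0 < p\<close>])
  qed
  then have "balanced p 0 (residue_count p ?N)"
    using assms(2-3,5-6) unfolding balanced_def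
    by (intro exI[of _ a] exI[of _ c]) (simp add: residue_count_nonmultiples[OF \<open>0 < p\<close>])
  ultimately show ?thesis by (simp add: admissible_def)
qed

theorem mainTheorem5:
  fixes p :: nat and lam :: "nat list" and a c :: nat
  assumes "prime p"
    and "is_partition lam"
    and "\<not> p dvd sum_list lam"
    and "a \<in> {1..p-1}" and "c \<in> {1..p-1}" and "a \<noteq> c"
    and "r_j p lam a = max_r p lam" and "r_j p lam c = max_r p lam"
  shows "c_p p lam \<noteq> 0"
proof -
  define N where "N = {#x \<in># mset lam. \<not> p dvd x#}"
  define zs where "zs = filter ((dvd) p) lam"
  have "admissible p 0 N"
    unfolding N_def using assms(3-8) by (rule admissible_nonmultiples)
  then obtain xs where xs: "mset xs = N" "partial_sums_avoid p 0 xs"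
    using admissible_sequenceable by blast
  moreover have "N \<noteq> {#}" using \<open>admissible p 0 N\<close> by (auto simp: admissible_def)
  ultimately obtain x rest where "xs = x # rest" by (cases xs) auto
  have "mset (x # zs @ rest) = mset xs + mset zs" using \<open>xs = x # rest\<close> by simp
  also have "\<dots> = mset lam" using xs(1) mset_split_multiples[of lam p] by (simp only: N_def zs_def)
  finally have perm: "mset (x # zs @ rest) = mset lam" .
  moreover have "is_composition (x # zs @ rest)"
    using assms(2) mset_eq_setD[OF perm] by (simp add: is_partition_def is_composition_def)
  ultimately have "p_cumulative p (x # zs @ rest)"
    using xs(2) \<open>xs = x # rest\<close> p_cumulative_insert_multiples[of p x rest zs] by (simp add: zs_def)
  with perm show ?thesis by (rule c_p_neq_0)
qed

end
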